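(* Suppose both parties' preferences are single-peaked (as defined in the context). Let \((s,t)\) be a pure-strategy Nash equilibrium with \(t<s\). Then the election is tied at \((s,t)\), that is \(g(s,t)=T\), and \[ t<\tau_A<\tau_B<s. \]
   Context: Policy space: \(X=\{x_j:j\in I\}\) with \(x_j<x_{j+1}\), where \(I\subseteq\mathbb Z\) is an interval of integers (so \(X\) is finite or countably infinite and linearly ordered). Two parties \(A\) and \(B\) have ideal points \(\tau_A=x_p\) and \(\tau_B=x_q\) with \(p<q\). Each party \(i\in\{A,B\}\) has a weak preference order \(\succeq_i\) over \(X\) with unique ideal point \(\tau_i\); \(x\succ_i y\) means \(x\succeq_i y\) and not \(y\succeq_i x\). Single-peakedness of party preferences: for each party \(i\), if \(x_a<x_b\le\tau_i\) then \(x_b\succ_i x_a\), and if \(\tau_i\le x_b<x_a\) then \(x_b\succ_i x_a\). Each party chooses a platform in \(X\); party \(A\) chooses \(s\), party \(B\) chooses \(t\), giving platform profile \((s,t)\). Electorate: a finite set \(V\) of voters, each \(v\) with ideal point \(\theta_v\in X\), strict single-peaked preferences over \(X\) with peak \(\theta_v\), and an attraction interval \(A_v\subseteq X\) (an interval in the policy order containing \(\theta_v\)). Given \((s,t)\), voter \(v\) is active if \(s\in A_v\) or \(t\in A_v\); an active voter votes for the platform she strictly prefers and abstains if indifferent (in particular if \(s=t\)). Let \(N_A(s,t)\) (resp. \(N_B(s,t)\)) be the number of active voters strictly preferring \(s\) to \(t\) (resp. \(t\) to \(s\)). The outcome \(g(s,t)\in\{A,B,T\}\) is \(A\) if \(N_A>N_B\),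 \(B\) if \(N_B>N_A\), and \(T\) (tie) if equal; in particular \(g(s,s)=T\) for all \(s\). Party objectives (lexicographic): each party ranks Win \(\succ\) Tie \(\succ\) Lose (for \(A\), outcome \(A\) is a win and \(B\) a loss; symmetrically for \(B\)); among profiles with the same electoral outcome, party \(A\) ranks by its own platform \(s\) using \(\succeq_A\), and party \(B\) ranks by its own platform \(t\) using \(\succeq_B\). A pure-strategy Nash equilibrium is a profile \((s,t)\in X\times X\) at which neither party has a strictly profitable unilateral deviation under this ordering. *)

theory Defs
  imports Main
begin

text \<open>Policy space: X = x ` I with I an interval of integers and x strictly increasing on I.\<close>

definition int_interval :: "int set \<Rightarrow> bool" where
  "int_interval I \<longleftrightarrow> (\<forall>a b c. a \<in> I \<longrightarrow> c \<in> I \<longrightarrow> a \<le> b \<longrightarrow> b \<le> c \<longrightarrow> b \<in> I)"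

text \<open>Weak preference orders (R a b means a is weakly preferred to b).\<close>

definition weak_order_on :: "'a set \<Rightarrow> ('a \<Rightarrow> 'a \<Rightarrow> bool) \<Rightarrow> bool" where
  "weak_order_on X R \<longleftrightarrow>
     (\<forall>a\<in>X. \<forall>b\<in>X. R a b \<or> R b a) \<and>
     (\<forall>a\<in>X. \<forall>b\<in>X. \<forall>c\<in>X. R a b \<longrightarrow> R b c \<longrightarrow> R a c)"

definition strict_pref :: "('a \<Rightarrow> 'a \<Rightarrow> bool) \<Rightarrow> 'a \<Rightarrow> 'a \<Rightarrow> bool" where
  "strict_pref R a b \<longleftrightarrow> R a b \<and> \<not> R b a"

definition unique_ideal :: "'a set \<Rightarrow> ('a \<Rightarrow> 'a \<Rightarrow> bool) \<Rightarrow> 'a \<Rightarrow> bool" where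
  "unique_ideal X R \<tau> \<longleftrightarrow> \<tau> \<in> X \<and> (\<forall>y\<in>X. y \<noteq> \<tau> \<longrightarrow> strict_pref R \<tau> y)"

definition single_peaked_party :: "'a::linorder set \<Rightarrow> ('a \<Rightarrow> 'a \<Rightarrow> bool) \<Rightarrow> 'a \<Rightarrow> bool" where
  "single_peaked_party X R \<tau> \<longleftrightarrow>
     (\<forall>a\<in>X. \<forall>b\<in>X. (a < b \<and> b \<le> \<tau> \<longrightarrow> strict_pref R b a) \<and>
                    (\<tau> \<le> b \<and> b < a \<longrightarrow> strict_pref R b a))"

text \<open>Strict (linear) voter preferences: P a b means a is strictly preferred to b.\<close>
definition strict_linear_pref :: "'a set \<Rightarrow> ('a \<Rightarrow> 'a \<Rightarrow> bool) \<Rightarrow> bool" where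
  "strict_linear_pref X P \<longleftrightarrow>
     (\<forall>a\<in>X. \<not> P a a) \<and>
     (\<forall>a\<in>X. \<forall>b\<in>X. \<forall>c\<in>X. P a b \<longrightarrow> P b c \<longrightarrow> P a c) \<and>
     (\<forall>a\<in>X. \<forall>b\<in>X. a \<noteq> b \<longrightarrow> P a b \<or> P b a)"

definition single_peaked_strict :: "'a::linorder set \<Rightarrow> ('a \<Rightarrow> 'a \<Rightarrow> bool) \<Rightarrow> 'a \<Rightarrow> bool" where
  "single_peaked_strict X P \<theta> \<longleftrightarrow>
     (\<forall>a\<in>X. \<forall>b\<in>X. (a < b \<and> b \<le> \<theta> \<longrightarrow> P b a) \<and> (\<theta> \<le> b \<and> b < a \<longrightarrow> P b a))"

definition interval_in :: "'a::linorder set \<Rightarrow> 'a set \<Rightarrow> bool" where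
  "interval_in X S \<longleftrightarrow> S \<subseteq> X \<and> (\<forall>a\<in>S. \<forall>c\<in>S. \<forall>b\<in>X. a \<le> b \<longrightarrow> b \<le> c \<longrightarrow> b \<in> S)"

definition electorate ::
  "'a::linorder set \<Rightarrow> 'v set \<Rightarrow> ('v \<Rightarrow> 'a) \<Rightarrow> ('v \<Rightarrow> 'a \<Rightarrow> 'a \<Rightarrow> bool) \<Rightarrow> ('v \<Rightarrow> 'a set) \<Rightarrow> bool" where
  "electorate X V \<theta> P Av \<longleftrightarrow> finite V \<and>
     (\<forall>v\<in>V. \<theta> v \<in> X \<and> strict_linear_pref X (P v) \<and> single_peaked_strict X (P v) (\<theta> v) \<and>
             interval_in X (Av v) \<and> \<theta> v \<in> Av v)"

definition active :: "('v \<Rightarrow> 'a set) \<Rightarrow> 'v \<Rightarrow> 'a \<Rightarrow> 'a \<Rightarrow> bool" where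
  "active Av v s t \<longleftrightarrow> s \<in> Av v \<or> t \<in> Av v"

definition N_A :: "'v set \<Rightarrow> ('v \<Rightarrow> 'a \<Rightarrow> 'a \<Rightarrow> bool) \<Rightarrow> ('v \<Rightarrow> 'a set) \<Rightarrow> 'a \<Rightarrow> 'a \<Rightarrow> nat" where
  "N_A V P Av s t = card {v\<in>V. active Av v s t \<and> P v s t}"

definition N_B :: "'v set \<Rightarrow> ('v \<Rightarrow> 'a \<Rightarrow> 'a \<Rightarrow> bool) \<Rightarrow> ('v \<Rightarrow> 'a set) \<Rightarrow> 'a \<Rightarrow> 'a \<Rightarrow> nat" where
  "N_B V P Av s t = card {v\<in>V. active Av v s t \<and> P v t s}"

datatype outcome = OutA | OutB | OutT

definition g :: "'v set \<Rightarrow> ('v \<Rightarrow> 'a \<Rightarrow> 'a \<Rightarrow> bool) \<Rightarrow> ('v \<Rightarrow> 'a set) \<Rightarrow> 'a \<Rightarrow> 'a \<Rightarrow> outcome" where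
  "g V P Av s t =
     (if N_A V P Av s t > N_B V P Av s t then OutA
      else if N_B V P Av s t > N_A V P Av s t then OutB else OutT)"

fun rank_A :: "outcome \<Rightarrow> nat" where
  "rank_A OutA = 2" | "rank_A OutT = 1" | "rank_A OutB = 0"

fun rank_B :: "outcome \<Rightarrow> nat" where
  "rank_B OutB = 2" | "rank_B OutT = 1" | "rank_B OutA = 0"

definition nash ::
  "'a set \<Rightarrow> ('a \<Rightarrow> 'a \<Rightarrow> bool) \<Rightarrow> ('a \<Rightarrow> 'a \<Rightarrow> bool) \<Rightarrow> 'v set \<Rightarrow> ('v \<Rightarrow> 'a \<Rightarrow> 'a \<Rightarrow> bool)
   \<Rightarrow> ('v \<Rightarrow> 'a set) \<Rightarrow> 'a \<Rightarrow> 'a \<Rightarrow> bool" where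
  "nash X RA RB V P Av s t \<longleftrightarrow> s \<in> X \<and> t \<in> X \<and>
     (\<forall>s'\<in>X. \<not> (rank_A (g V P Av s' t) > rank_A (g V P Av s t) \<or>
                  (rank_A (g V P Av s' t) = rank_A (g V P Av s t) \<and> strict_pref RA s' s))) \<and>
     (\<forall>t'\<in>X. \<not> (rank_B (g V P Av s t') > rank_B (g V P Av s t) \<or>
                  (rank_B (g V P Av s t') = rank_B (g V P Av s t) \<and> strict_pref RB t' t)))"

end

theory Submission
  imports Defs
begin

text \<open>Each party can always tie by copying its opponent's platform, since g a a = OutT.
  Hence nobody loses at an equilibrium, so the election is tied; and since copying still
  ties, neither party strictly prefers the opponent's platform to its own. By
  single-peakedness this forces t to lie left of A's peak and s right of B's peak.\<close>

lemma g_same_platform: "g V P Av a a = OutT"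
  unfolding g_def N_A_def N_B_def by simp

lemma nash_imp_tie:
  assumes "nash X RA RB V P Av s t"
  shows "g V P Av s t = OutT"
proof -
  have "s \<in> X" "t \<in> X" using assms by (auto simp: nash_def)
  then have "\<not> rank_A OutT > rank_A (g V P Av s t)" "\<not> rank_B OutT > rank_B (g V P Av s t)"
    using assms unfolding nash_def by (metis g_same_platform)+
  then show ?thesis by (cases "g V P Av s t") auto
qed

lemma nash_imp_not_prefers_opponent:
  assumes "nash X RA RB V P Av s t"
  shows "\<not> strict_pref RA t s" and "\<not> strict_pref RB s t"
proof -
  have tie: "g V P Av s t = OutT" using assms by (rule nash_imp_tie)
  have "s \<in> X" "t \<in> X" using assms by (auto simp: nash_def)
  then show "\<not> strict_pref RA t s" "\<not> strict_pref RB s t"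
    using assms tie unfolding nash_def by (metis g_same_platform)+
qed

lemma single_peaked_party_left_of_peak:
  assumes "single_peaked_party X R \<tau>" "a \<in> X" "b \<in> X" "b < a" "\<not> strict_pref R b a"
  shows "b < \<tau>"
  using assms unfolding single_peaked_party_def by (meson not_less)

lemma single_peaked_party_right_of_peak:
  assumes "single_peaked_party X R \<tau>" "a \<in> X" "b \<in> X" "a < b" "\<not> strict_pref R b a"
  shows "\<tau> < b"
  using assms unfolding single_peaked_party_def by (meson not_less)

theorem proposition1:
  fixes x :: "int \<Rightarrow> 'a::linorder" and I :: "int set" and p q :: int
    and RA RB :: "'a \<Rightarrow> 'a \<Rightarrow> bool"
    and V :: "'v set" and \<theta> :: "'v \<Rightarrow> 'a" and P :: "'v \<Rightarrow> 'a \<Rightarrow> 'a \<Rightarrow> bool"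
    and Av :: "'v \<Rightarrow> 'a set" and s t :: 'a
  assumes "int_interval I" and "strict_mono_on I x"
    and "p \<in> I" and "q \<in> I" and "p < q"
    and "weak_order_on (x ` I) RA" and "unique_ideal (x ` I) RA (x p)"
    and "single_peaked_party (x ` I) RA (x p)"
    and "weak_order_on (x ` I) RB" and "unique_ideal (x ` I) RB (x q)"
    and "single_peaked_party (x ` I) RB (x q)"
    and "electorate (x ` I) V \<theta> P Av"
    and "nash (x ` I) RA RB V P Av s t"
    and "t < s"
  shows "g V P Av s t = OutT \<and> t < x p \<and> x p < x q \<and> x q < s"
proof -
  note eq = assms(13)
  have platforms: "s \<in> x ` I" "t \<in> x ` I" using eq by (auto simp: nash_def)
  have "t < x p"
    using single_peaked_party_left_of_peak[OF assms(8) platforms assms(14)]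
      nash_imp_not_prefers_opponent(1)[OF eq] by blast
  moreover have "x q < s"
    using single_peaked_party_right_of_peak[OF assms(11) platforms(2,1) assms(14)]
      nash_imp_not_prefers_opponent(2)[OF eq] by blast
  moreover have "x p < x q" using assms(2-5) by (rule strict_mono_onD)
  ultimately show ?thesis using nash_imp_tie[OF eq] by blast
qed

end
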